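(* Let $\mathcal{M}_{\mathbb{P}}=(\mathcal{M},\mathbb{P})$ be an uncertain parametric MDP, $\varphi$ a specification with comparison operator $\le$, threshold $\lambda$ and associated solution function $\mathrm{sol}_{\mathcal{M}}$, and $\mathcal{U}_N$ a set of $N\ge1$ parameter instantiations sampled independently from $\mathbb{P}$. Let $\mathcal{U}_{N_\varphi}=\{u\in\mathcal{U}_N:\mathrm{sol}_{\mathcal{M}}(u)\le\lambda\}$ be the satisfying samples, $N_{\neg\varphi}=N-|\mathcal{U}_{N_\varphi}|$ the number of violating samples, and $\tau^+=\max_{u\in\mathcal{U}_{N_\varphi}}\mathrm{sol}_{\mathcal{M}}(u)$. Fix a confidence probability $\beta\in(0,1)$. Define $t^*(N)=0$, and for $k=0,\dots,N-1$ let $t^*(k)$ be the solution $t$ of \[\frac{1-\beta}{N}=\sum_{i=0}^{k}\binom{N}{i}(1-t)^i t^{N-i}.\] Then \[\mathbb{P}^N\Big\{\Pr\{u\in\mathcal{V}_{\mathcal{M}}\mid \mathrm{sol}_{\mathcal{M}}(u)\le\tau^+\}\ \ge\ t^*(N_{\neg\varphi})\Big\}\ \ge\ \beta,\] where the inner probability is with respect to $u$ drawn from $\mathbb{P}$.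
   Context: A parametric MDP is $\mathcal{M}=(S,\mathit{Act},s_I,V,\mathcal{P})$ with finite states and actions, initial state, finite parameter set $V$ and transition function $\mathcal{P}:S\times\mathit{Act}\times S\to\mathbb{Q}[V]$. Instantiations $u:V\to\mathbb{R}$ form the parameter space $\mathcal{V}_{\mathcal{M}}$; $\mathcal{M}[u]$ is the instantiated MDP, assumed well-defined and graph-preserving. An uncertain pMDP is $(\mathcal{M},\mathbb{P})$ with $\mathbb{P}$ a probability distribution on $\mathcal{V}_{\mathcal{M}}$. A specification $\varphi$ with operator $\le$ consists of a measure on MDPs (e.g. maximal reachability probability, expected reward) and a threshold $\lambda$; the solution function $\mathrm{sol}_{\mathcal{M}}:\mathcal{V}_{\mathcal{M}}\to\mathbb{R}$ maps $u$ to the value of the measure on $\mathcal{M}[u]$ (assumed measurable), and $\mathcal{M}[u]\models\varphi$ iff $\mathrm{sol}_{\mathcal{M}}(u)\le\lambda$. $\mathbb{P}^N$ is the $N$-fold product measure governing $\mathcal{U}_N$. (When $N_{\neg\varphi}=N$ the set $\mathcal{U}_{N_\varphi}$ is empty and the bound $t^*(N)=0$ holds trivially.) *)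

theory Defs
  imports "HOL-Probability.Probability"
begin

definition tstar :: "nat \<Rightarrow> real \<Rightarrow> nat \<Rightarrow> real" where
  "tstar N \<beta> k =
     (if k \<ge> N then 0
      else (THE t. 0 \<le> t \<and> t \<le> 1 \<and>
              (1 - \<beta>) / real N = (\<Sum>i\<le>k. real (N choose i) * (1 - t) ^ i * t ^ (N - i))))"

definition sat_idx :: "('u \<Rightarrow> real) \<Rightarrow> real \<Rightarrow> nat \<Rightarrow> (nat \<Rightarrow> 'u) \<Rightarrow> nat set" where
  "sat_idx sol lam N \<omega> = {i. i < N \<and> sol (\<omega> i) \<le> lam}"

definition num_viol :: "('u \<Rightarrow> real) \<Rightarrow> real \<Rightarrow> nat \<Rightarrow> (nat \<Rightarrow> 'u) \<Rightarrow> nat" where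
  "num_viol sol lam N \<omega> = N - card (sat_idx sol lam N \<omega>)"

text \<open>tau+ = max of sol over the satisfying samples (arbitrary if there are none).\<close>
definition tau_plus :: "('u \<Rightarrow> real) \<Rightarrow> real \<Rightarrow> nat \<Rightarrow> (nat \<Rightarrow> 'u) \<Rightarrow> real" where
  "tau_plus sol lam N \<omega> = Max ((\<lambda>i. sol (\<omega> i)) ` sat_idx sol lam N \<omega>)"

end

theory Submission
  imports Defs
begin

(* Write F for the distribution function of sol, S for the satisfying samples and k = N - |S|.
   If S is nonempty and F(tau+) < t*(k), then every sample u with F(sol u) >= t*(k) violates the
   specification, so at most k of the N samples lie in the event {F(sol u) >= t*(k)}.  By the
   probability integral transform this event has probability at least 1 - t*(k), so the number
   of samples in it dominates a Bin(N, 1 - t*(k)) variable, and at most k of them occur with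
   probability at most sum_{i<=k} (N choose i) (1-t*(k))^i t*(k)^(N-i) = (1 - beta)/N.
   A union bound over k < N leaves failure probability at most 1 - beta. *)

definition binomial_cdf :: "nat \<Rightarrow> real \<Rightarrow> nat \<Rightarrow> real" where
  "binomial_cdf n p k = (\<Sum>i\<le>k. real (n choose i) * p ^ i * (1 - p) ^ (n - i))"

lemma binomial_cdf_0 [simp]: "binomial_cdf 0 p k = 1"
  unfolding binomial_cdf_def by (induction k) auto

lemma binomial_cdf_Suc_0: "binomial_cdf (Suc n) p 0 = (1 - p) * binomial_cdf n p 0"
  unfolding binomial_cdf_def by simp

lemma binomial_cdf_Suc_Suc:
  "binomial_cdf (Suc n) p (Suc k) = p * binomial_cdf n p k + (1 - p) * binomial_cdf n p (Suc k)"
proof -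
  have pascal: "real (Suc n choose i) * p ^ i * (1 - p) ^ (Suc n - i) =
      p * (if i = 0 then 0 else real (n choose (i - 1)) * p ^ (i - 1) * (1 - p) ^ (n - (i - 1)))
      + (1 - p) * (real (n choose i) * p ^ i * (1 - p) ^ (n - i))" for i
  proof (cases i)
    case (Suc j)
    show ?thesis
    proof (cases "j < n")
      case True
      then have "n - j = Suc (n - Suc j)" by simp
      then show ?thesis using Suc by (simp add: algebra_simps)
    qed (simp add: Suc binomial_eq_0)
  qed simp
  show ?thesis
    unfolding binomial_cdf_def pascal sum.distrib sum_distrib_left[symmetric]
    by (simp add: sum.atMost_Suc_shift del: sum.atMost_Suc)
qed

lemma binomial_cdf_le_Suc: "0 \<le> p \<Longrightarrow> p \<le> 1 \<Longrightarrow> binomial_cdf n p k \<le> binomial_cdf n p (Suc k)"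
  unfolding binomial_cdf_def by simp

lemma binomial_cdf_eq_1: "n \<le> k \<Longrightarrow> binomial_cdf n p k = 1"
proof -
  assume "n \<le> k"
  then have "binomial_cdf n p k = (\<Sum>i\<le>n. real (n choose i) * p ^ i * (1 - p) ^ (n - i))"
    unfolding binomial_cdf_def by (intro sum.mono_neutral_right) auto
  also have "\<dots> = (p + (1 - p)) ^ n"
    by (rule binomial_ring[symmetric])
  finally show ?thesis by simp
qed

lemma binomial_cdf_at_0 [simp]: "binomial_cdf n 0 k = 1"
  unfolding binomial_cdf_def by (induction k) auto

lemma binomial_cdf_at_1: "k < n \<Longrightarrow> binomial_cdf n 1 k = 0"
  unfolding binomial_cdf_def by (intro sum.neutral) auto

lemma continuous_on_binomial_cdf [continuous_intros]:
  "continuous_on S f \<Longrightarrow> continuous_on S (\<lambda>x. binomial_cdf n (f x) k)"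
  unfolding binomial_cdf_def by (intro continuous_intros)

lemma binomial_cdf_strict_antimono:
  assumes "k < n" "0 \<le> p" "p < q" "q \<le> 1"
  shows "binomial_cdf n q k < binomial_cdf n p k"
  using assms(1)
proof (induction n arbitrary: k)
  case (Suc n)
  show ?case
  proof (cases k)
    case 0
    have "(1 - q) ^ Suc n < (1 - p) ^ Suc n"
      by (rule power_strict_mono) (use assms in auto)
    then show ?thesis
      using 0 by (simp add: binomial_cdf_def)
  next
    case (Suc j)
    let ?F = "binomial_cdf n"
    have "q * (?F q j - ?F p j) < 0"
      using Suc.IH[of j] Suc.prems \<open>k = Suc j\<close> assms by (simp add: mult_pos_neg)
    moreover have "(1 - q) * (?F q k - ?F p k) \<le> 0"
    proof (cases "k < n")
      case True
      then show ?thesis using Suc.IH[of k] assms by (simp add: mult_nonneg_nonpos)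
    qed (simp add: binomial_cdf_eq_1)
    moreover have "(q - p) * (?F p j - ?F p k) \<le> 0"
      using binomial_cdf_le_Suc[of p n j] assms \<open>k = Suc j\<close> by (simp add: mult_nonneg_nonpos)
    ultimately show ?thesis
      unfolding \<open>k = Suc j\<close> binomial_cdf_Suc_Suc by (simp add: algebra_simps)
  qed
qed simp

lemma binomial_cdf_antimono:
  assumes "0 \<le> p" "p \<le> q" "q \<le> 1"
  shows "binomial_cdf n q k \<le> binomial_cdf n p k"
proof (cases "k < n \<and> p < q")
  case True
  then show ?thesis using binomial_cdf_strict_antimono[of k n p q] assms by simp
next
  case False
  then show ?thesis using assms by (auto simp: binomial_cdf_eq_1)
qed

lemma tstar_binomial_cdf:
  assumes "k < N" "0 \<le> \<beta>" "\<beta> \<le> 1"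
  shows "0 \<le> tstar N \<beta> k \<and> tstar N \<beta> k \<le> 1 \<and> binomial_cdf N (1 - tstar N \<beta> k) k = (1 - \<beta>) / N"
proof -
  let ?y = "(1 - \<beta>) / N" and ?g = "\<lambda>t. binomial_cdf N (1 - t) k"
  have "?g 0 \<le> ?y" "?y \<le> ?g 1"
    using assms by (simp_all add: binomial_cdf_at_1 field_simps)
  moreover have "continuous_on {0..1} ?g"
    by (intro continuous_intros)
  ultimately obtain t where t: "0 \<le> t" "t \<le> 1" "?g t = ?y"
    using IVT'[of ?g 0 ?y 1] by auto
  have "strict_mono_on {0..1} ?g"
    by (rule strict_mono_onI) (use assms(1) binomial_cdf_strict_antimono in auto)
  then have "(THE t. 0 \<le> t \<and> t \<le> 1 \<and> ?y = ?g t) = t"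
    using t by (intro the_equality) (auto dest: strict_mono_on_eqD)
  then have "tstar N \<beta> k = t"
    using assms(1) by (simp add: tstar_def binomial_cdf_def)
  with t show ?thesis by simp
qed

lemma card_less_Suc_fun_upd:
  "card {i. i < Suc n \<and> Q ((x(n := y)) i)} = card {i. i < n \<and> Q (x i)} + (if Q y then 1 else 0)"
proof -
  have "{i. i < Suc n \<and> Q ((x(n := y)) i)} = (if Q y then insert n else id) {i. i < n \<and> Q (x i)}"
    by (auto simp: less_Suc_eq)
  then show ?thesis by simp
qed

lemma (in prob_space) prob_PiM_Suc_card_le:
  fixes n k :: nat
  assumes Q: "{u \<in> space M. Q u} \<in> events"
  defines "C \<equiv> {u \<in> space M. Q u}" and "c \<equiv> \<lambda>x. card {i. i < n \<and> Q (x i)}"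
  shows "measure (PiM {..<Suc n} (\<lambda>_. M))
      {\<omega> \<in> space (PiM {..<Suc n} (\<lambda>_. M)). card {i. i < Suc n \<and> Q (\<omega> i)} \<le> k}
    = prob C * measure (PiM {..<n} (\<lambda>_. M)) {x \<in> space (PiM {..<n} (\<lambda>_. M)). c x < k}
      + (1 - prob C) * measure (PiM {..<n} (\<lambda>_. M)) {x \<in> space (PiM {..<n} (\<lambda>_. M)). c x \<le> k}"
proof -
  interpret PS: product_prob_space "\<lambda>_::nat. M" "insert n {..<n}"
    by (rule product_prob_spaceI) (rule prob_space_axioms)
  let ?M = "PiM {..<n} (\<lambda>_. M)"
  interpret PiM_n: prob_space ?M
    by (rule prob_space_PiM) (rule prob_space_axioms)
  define E where "E = {\<omega> \<in> space (PiM {..<Suc n} (\<lambda>_. M)). card {i. i < Suc n \<and> Q (\<omega> i)} \<le> k}"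
  have E: "E \<in> sets (PiM (insert n {..<n}) (\<lambda>_. M))"
    unfolding E_def lessThan_Suc[symmetric] using Q by measurable
  have fiber: "indicator E (x(n := y)) =
      indicator {x \<in> space ?M. c x < k} x * indicator C y
      + indicator {x \<in> space ?M. c x \<le> k} x * (indicator (space M - C) y :: real)"
    if "x \<in> space ?M" "y \<in> space M" for x y
  proof -
    have "x(n := y) \<in> space (PiM {..<Suc n} (\<lambda>_. M))"
      using that by (auto simp: space_PiM lessThan_Suc intro!: PiE_fun_upd)
    then have "x(n := y) \<in> E \<longleftrightarrow> (if Q y then c x < k else c x \<le> k)"
      unfolding E_def c_def mem_Collect_eq card_less_Suc_fun_upd by auto
    then show ?thesis
      using that by (auto simp: indicator_def C_def)
  qed
  have inner: "(\<integral>y. indicator E (x(n := y)) \<partial>M) =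
      prob C * indicator {x \<in> space ?M. c x < k} x + (1 - prob C) * indicator {x \<in> space ?M. c x \<le> k} x"
    if "x \<in> space ?M" for x
  proof -
    have "(\<integral>y. indicator E (x(n := y)) \<partial>M) =
      (\<integral>y. (indicator {x \<in> space ?M. c x < k} x :: real) * indicator C y
        + indicator {x \<in> space ?M. c x \<le> k} x * indicator (space M - C) y \<partial>M)"
      using that by (intro Bochner_Integration.integral_cong) (auto intro: fiber)
    also have "\<dots> = indicator {x \<in> space ?M. c x < k} x * prob C
        + indicator {x \<in> space ?M. c x \<le> k} x * prob (space M - C)"
      using Q unfolding C_def
      by (subst Bochner_Integration.integral_add) (auto simp: integrable_indicator_iff less_top[symmetric])
    finally show ?thesis
      using Q by (simp add: C_def prob_compl mult.commute)
  qed
  have "measure (PiM {..<Suc n} (\<lambda>_. M)) E = (\<integral>x. \<integral>y. indicator E (x(n := y)) \<partial>M \<partial>?M)"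
    unfolding lessThan_Suc using E
    by (subst PS.product_integral_insert[symmetric]) (auto simp: integrable_indicator_iff less_top[symmetric])
  also have "\<dots> = (\<integral>x. prob C * indicator {x \<in> space ?M. c x < k} x
      + (1 - prob C) * indicator {x \<in> space ?M. c x \<le> k} x \<partial>?M)"
    by (intro Bochner_Integration.integral_cong) (simp_all add: inner)
  also have "\<dots> = prob C * measure ?M {x \<in> space ?M. c x < k} + (1 - prob C) * measure ?M {x \<in> space ?M. c x \<le> k}"
    using Q unfolding c_def
    by (subst Bochner_Integration.integral_add) (auto simp: integrable_indicator_iff less_top[symmetric])
  finally show ?thesis unfolding E_def .
qed

lemma (in prob_space) prob_PiM_card_le_eq_binomial_cdf:
  assumes Q: "{u \<in> space M. Q u} \<in> events"
  shows "measure (PiM {..<n} (\<lambda>_. M)) {\<omega> \<in> space (PiM {..<n} (\<lambda>_. M)). card {i. i < n \<and> Q (\<omega> i)} \<le> k}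
    = binomial_cdf n (prob {u \<in> space M. Q u}) k"
proof (induction n arbitrary: k)
  case 0
  interpret PiM_0: prob_space "PiM {..<0::nat} (\<lambda>_. M)"
    by (rule prob_space_PiM) (rule prob_space_axioms)
  show ?case using PiM_0.prob_space by simp
next
  case (Suc n)
  show ?case
  proof (cases k)
    case 0
    then show ?thesis
      using Suc.IH[of 0] prob_PiM_Suc_card_le[OF Q, of n 0] by (simp add: binomial_cdf_Suc_0)
  next
    case (Suc j)
    show ?thesis
      unfolding prob_PiM_Suc_card_le[OF Q] \<open>k = Suc j\<close>
      by (simp add: Suc.IH binomial_cdf_Suc_Suc less_Suc_eq_le)
  qed
qed

lemma (in real_distribution) measure_lessThan_le:
  assumes "\<And>x. x < s \<Longrightarrow> cdf M x \<le> t"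
  shows "measure M {..<s} \<le> t"
proof -
  have "eventually (\<lambda>x. cdf M x \<le> t) (at_left s)"
    using eventually_at_left_real[of "s - 1" s] by (rule eventually_mono) (auto intro: assms)
  then show ?thesis
    using cdf_at_left[of s] by (intro tendsto_upperbound) auto
qed

lemma (in real_distribution) measure_cdf_less_le:
  assumes "0 \<le> t"
  shows "measure M {x. cdf M x < t} \<le> t"
proof -
  define S where "S = {x. cdf M x < t}"
  have down: "x \<in> S" if "y \<in> S" "x \<le> y" for x y
    using that cdf_nondecreasing[of x y] unfolding S_def by simp
  \<comment> \<open>S is a down-set, hence empty, all of the reals, {..s} or {..<s} with s = Sup S.\<close>
  consider "S = {}" | "\<not> bdd_above S" | "S \<noteq> {}" "bdd_above S"
    by blast
  then have "measure M S \<le> t"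
  proof cases
    case 1
    then show ?thesis using assms by simp
  next
    case 2
    have "x \<in> S" for x
      using 2 down unfolding bdd_above_def by (meson linorder_linear)
    then have "cdf M x \<le> t" for x
      unfolding S_def by (simp add: less_imp_le)
    then have "1 \<le> t"
      using cdf_lim_at_top_prob by (intro tendsto_upperbound) auto
    then show ?thesis
      using prob_le_1[of S] by linarith
  next
    case 3
    define s where "s = Sup S"
    have below: "x \<in> S" if "x < s" for x
      using that less_cSup_iff[OF 3] down unfolding s_def by (meson less_imp_le)
    have above: "x \<le> s" if "x \<in> S" for x
      using that cSup_upper[OF _ 3(2)] unfolding s_def by simp
    show ?thesis
    proof (cases "s \<in> S")
      case True
      with above down have "S = {..s}"
        by auto
      with True show ?thesis
        by (simp add: S_def cdf_def less_imp_le)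
    next
      case False
      with above below have "S = {..<s}"
        by (auto simp: order.order_iff_strict)
      with below show ?thesis
        by (simp add: S_def less_imp_le measure_lessThan_le)
    qed
  qed
  then show ?thesis unfolding S_def .
qed

lemma (in prob_space) prob_PiM_card_cdf_ge_le_binomial_cdf:
  fixes X :: "'a \<Rightarrow> real"
  assumes X: "random_variable borel X" and t: "0 \<le> t" "t \<le> 1"
  shows "measure (PiM {..<n} (\<lambda>_. M))
      {\<omega> \<in> space (PiM {..<n} (\<lambda>_. M)). card {i. i < n \<and> t \<le> prob {u \<in> space M. X u \<le> X (\<omega> i)}} \<le> k}
    \<le> binomial_cdf n (1 - t) k"
proof -
  let ?F = "cdf (distr M borel X)" and ?C = "{u \<in> space M. t \<le> cdf (distr M borel X) (X u)}"
  interpret D: real_distribution "distr M borel X"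
    using X by simp
  have F: "prob {u \<in> space M. X u \<le> x} = ?F x" for x
    using X by (simp add: cdf_def measure_distr vimage_def Int_def conj_commute)
  have [measurable]: "?F \<in> borel_measurable borel"
    using D.cdf_nondecreasing by (intro borel_measurable_mono monoI)
  have C: "?C \<in> events"
    using X by measurable
  have "prob (space M - ?C) = measure (distr M borel X) {x. ?F x < t}"
    using X by (subst measure_distr) (auto intro!: arg_cong[where f = prob])
  also have "\<dots> \<le> t"
    using t(1) by (rule D.measure_cdf_less_le)
  finally have "1 - t \<le> prob ?C"
    using prob_compl[OF C] by simp
  then show ?thesis
    unfolding F prob_PiM_card_le_eq_binomial_cdf[OF C]
    using t by (intro binomial_cdf_antimono) auto
qed

lemma (in prob_space) prob_ge_of_compl_subset_Union:
  fixes n :: nat and \<epsilon> :: real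
  assumes "A \<in> events" "\<And>k. k < n \<Longrightarrow> B k \<in> events" "space M - A \<subseteq> (\<Union>k<n. B k)"
    and "\<And>k. k < n \<Longrightarrow> prob (B k) \<le> \<epsilon>"
  shows "1 - n * \<epsilon> \<le> prob A"
proof -
  have "1 - prob A = prob (space M - A)"
    using prob_compl[OF assms(1)] ..
  also have "\<dots> \<le> prob (\<Union>k<n. B k)"
    using assms(2,3) by (intro finite_measure_mono sets.finite_UN) auto
  also have "\<dots> \<le> (\<Sum>k<n. prob (B k))"
    using assms(2) by (intro finite_measure_subadditive_finite) auto
  also have "\<dots> \<le> n * \<epsilon>"
    using assms(4) sum_bounded_above[of "{..<n}" "\<lambda>k. prob (B k)" \<epsilon>] by simp
  finally show ?thesis by simp
qed

lemma threshold_le_tau_plus_iff: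
  fixes F :: "real \<Rightarrow> 'a::linorder" and c :: "nat \<Rightarrow> 'a"
  assumes "mono F" "\<And>x. c N \<le> F x"
  shows "c (num_viol sol lam N \<omega>) \<le> F (tau_plus sol lam N \<omega>) \<longleftrightarrow>
    sat_idx sol lam N \<omega> = {} \<or> (\<exists>i \<in> sat_idx sol lam N \<omega>. c (num_viol sol lam N \<omega>) \<le> F (sol (\<omega> i)))"
proof (cases "sat_idx sol lam N \<omega> = {}")
  case True
  then show ?thesis
    using assms(2) by (simp add: num_viol_def)
next
  case False
  have "finite (sat_idx sol lam N \<omega>)"
    by (simp add: sat_idx_def)
  with assms False have "F (tau_plus sol lam N \<omega>) = Max ((\<lambda>i. F (sol (\<omega> i))) ` sat_idx sol lam N \<omega>)"
    unfolding tau_plus_def by (subst mono_Max_commute) (auto simp: image_image)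
  with False \<open>finite (sat_idx sol lam N \<omega>)\<close> show ?thesis
    by (simp add: Max_ge_iff)
qed

lemma sets_PiM_threshold_le_tau_plus:
  fixes F :: "real \<Rightarrow> real"
  assumes [measurable]: "sol \<in> borel_measurable M" "F \<in> borel_measurable borel"
    and "mono F" "\<And>x. c N \<le> F x"
  shows "{\<omega> \<in> space (PiM {..<N} (\<lambda>_. M)). c (num_viol sol lam N \<omega>) \<le> F (tau_plus sol lam N \<omega>)}
    \<in> sets (PiM {..<N} (\<lambda>_. M))"
proof -
  have "{\<omega> \<in> space (PiM {..<N} (\<lambda>_. M)). c (num_viol sol lam N \<omega>) \<le> F (tau_plus sol lam N \<omega>)} =
    {\<omega> \<in> space (PiM {..<N} (\<lambda>_. M)). (\<forall>i<N. lam < sol (\<omega> i)) \<or>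
      (\<exists>i<N. sol (\<omega> i) \<le> lam \<and> c (N - card {i. i < N \<and> sol (\<omega> i) \<le> lam}) \<le> F (sol (\<omega> i)))}"
    unfolding threshold_le_tau_plus_iff[where c = c, OF assms(3,4)] by (auto simp: sat_idx_def num_viol_def)
  also have "\<dots> \<in> sets (PiM {..<N} (\<lambda>_. M))"
    by measurable
  finally show ?thesis .
qed

lemma card_le_num_viol:
  fixes F :: "real \<Rightarrow> 'a::linorder"
  assumes "\<forall>i \<in> sat_idx sol lam N \<omega>. F (sol (\<omega> i)) < t"
  shows "card {i. i < N \<and> t \<le> F (sol (\<omega> i))} \<le> num_viol sol lam N \<omega>"
proof -
  have "{i. i < N \<and> t \<le> F (sol (\<omega> i))} \<subseteq> {..<N} - sat_idx sol lam N \<omega>"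
    using assms by (auto simp: not_less[symmetric])
  then have "card {i. i < N \<and> t \<le> F (sol (\<omega> i))} \<le> card ({..<N} - sat_idx sol lam N \<omega>)"
    by (intro card_mono) auto
  also have "\<dots> = num_viol sol lam N \<omega>"
    by (simp add: num_viol_def card_Diff_subset sat_idx_def subset_eq)
  finally show ?thesis .
qed

lemma few_above_threshold_if_tau_plus_below:
  fixes F :: "real \<Rightarrow> 'a::linorder" and c :: "nat \<Rightarrow> 'a"
  assumes "mono F" "\<And>x. c N \<le> F x" "\<not> c (num_viol sol lam N \<omega>) \<le> F (tau_plus sol lam N \<omega>)"
  shows "\<exists>k<N. card {i. i < N \<and> c k \<le> F (sol (\<omega> i))} \<le> k"
proof (intro exI conjI)
  have sat: "sat_idx sol lam N \<omega> \<noteq> {}"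
    and below: "\<forall>i \<in> sat_idx sol lam N \<omega>. F (sol (\<omega> i)) < c (num_viol sol lam N \<omega>)"
    using assms(3) unfolding threshold_le_tau_plus_iff[where c = c, OF assms(1,2)] by (auto simp: not_le)
  then have "0 < card (sat_idx sol lam N \<omega>)" "card (sat_idx sol lam N \<omega>) \<le> N"
    by (auto simp: card_gt_0_iff sat_idx_def intro: card_mono[of "{..<N}", simplified])
  then show "num_viol sol lam N \<omega> < N"
    by (simp add: num_viol_def)
  show "card {i. i < N \<and> c (num_viol sol lam N \<omega>) \<le> F (sol (\<omega> i))} \<le> num_viol sol lam N \<omega>"
    using below by (rule card_le_num_viol)
qed

theorem lemma2:
  fixes P :: "'u measure" and sol :: "'u \<Rightarrow> real" and lam \<beta> :: real and N :: nat
  assumes "prob_space P"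
    and "sol \<in> borel_measurable P"
    and "N \<ge> 1"
    and "0 < \<beta>" and "\<beta> < 1"
  shows "measure (PiM {..<N} (\<lambda>_. P))
           {\<omega> \<in> space (PiM {..<N} (\<lambda>_. P)).
              measure P {u \<in> space P. sol u \<le> tau_plus sol lam N \<omega>}
                \<ge> tstar N \<beta> (num_viol sol lam N \<omega>)} \<ge> \<beta>"
proof -
  interpret P: prob_space P by fact
  let ?M = "PiM {..<N} (\<lambda>_. P)"
  interpret M: prob_space ?M
    by (rule prob_space_PiM) (rule P.prob_space_axioms)
  define F where "F x = measure P {u \<in> space P. sol u \<le> x}" for x
  have "mono F"
    unfolding F_def using assms(2) by (intro monoI P.finite_measure_mono) auto
  then have [measurable]: "F \<in> borel_measurable borel"
    by (rule borel_measurable_mono)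
  have tstar_N: "tstar N \<beta> N \<le> F x" for x
    by (simp add: tstar_def F_def)
  define G where "G = {\<omega> \<in> space ?M. tstar N \<beta> (num_viol sol lam N \<omega>) \<le> F (tau_plus sol lam N \<omega>)}"
  define bad where "bad k = {\<omega> \<in> space ?M. card {i. i < N \<and> tstar N \<beta> k \<le> F (sol (\<omega> i))} \<le> k}" for k
  have "1 - N * ((1 - \<beta>) / N) \<le> measure ?M G"
  proof (rule M.prob_ge_of_compl_subset_Union)
    show "G \<in> M.events"
      unfolding G_def
      by (rule sets_PiM_threshold_le_tau_plus[where c = "tstar N \<beta>", OF assms(2) _ \<open>mono F\<close> tstar_N]) measurable
    show "bad k \<in> M.events" if "k < N" for k
      unfolding bad_def using assms(2) by measurable
    show "space ?M - G \<subseteq> (\<Union>k<N. bad k)"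
      using few_above_threshold_if_tau_plus_below[where c = "tstar N \<beta>", OF \<open>mono F\<close> tstar_N]
      by (auto simp: G_def bad_def)
    show "measure ?M (bad k) \<le> (1 - \<beta>) / N" if "k < N" for k
      using tstar_binomial_cdf[OF that] assms
        P.prob_PiM_card_cdf_ge_le_binomial_cdf[OF assms(2), of "tstar N \<beta> k" N k]
      by (simp add: bad_def F_def)
  qed
  then show ?thesis
    using assms(3) by (simp add: G_def F_def)
qed

end
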